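(* Let $R$ be as in the standing setup. Then $a_j\ge b_j$ for all $j=0,\ldots,e-1$.
   Context: Standing setup: $k$ is a field and $R$ is a complete local domain with $k\subseteq R\subseteq k[[t]]$, residue field $k$, maximal ideal $m$, and nonzero conductor $(R:k[[t]])\neq 0$. Let $v$ be the $t$-adic valuation, $S=v(R)=\{v(r): r\in R, r\neq 0\}$, $e$ the smallest positive element of $S$, and $w_j$ the smallest element of $S$ congruent to $j\pmod e$. For a nonzero ideal $I$, $v(I)=\{v(a): a\in I, a\ne0\}$; $m^0=R$. Set $b_j=\max\{i: w_j\in v(m^i)\}$. Let $R'=\bigcup_{n\ge0}(m^n:m^n)$ be the blowup (first neighborhood ring) of $R$, a subring of $k[[t]]$; let $w'_j$ be the smallest element of $v(R')$ congruent to $j\pmod e$, and define $a_j$ by $w'_j=w_j-a_je$. *)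

theory Defs
  imports "HOL-Computational_Algebra.Formal_Power_Series"
begin

text \<open>Setting: k is a field (type 'a), k[[t]] is 'a fps, the t-adic valuation
  v is subdegree.  R is represented as a set of formal power series.\<close>

definition is_subring_fps :: "'a::field fps set \<Rightarrow> bool" where
  "is_subring_fps R \<longleftrightarrow> 0 \<in> R \<and> 1 \<in> R \<and>
     (\<forall>x\<in>R. \<forall>y\<in>R. x + y \<in> R \<and> x - y \<in> R \<and> x * y \<in> R)"

definition contains_constants :: "'a::field fps set \<Rightarrow> bool" where
  "contains_constants R \<longleftrightarrow> (\<forall>c. fps_const c \<in> R)"

text \<open>Non-units of R; R is local iff this set is an ideal (the maximal ideal m).\<close>
definition max_ideal :: "'a::field fps set \<Rightarrow> 'a fps set" where
  "max_ideal R = {r \<in> R. \<not> (\<exists>s\<in>R. r * s = 1)}"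

definition is_ideal_of :: "'a::field fps set \<Rightarrow> 'a fps set \<Rightarrow> bool" where
  "is_ideal_of I R \<longleftrightarrow> I \<subseteq> R \<and> 0 \<in> I \<and>
     (\<forall>x\<in>I. \<forall>y\<in>I. x + y \<in> I) \<and> (\<forall>x\<in>I. \<forall>r\<in>R. r * x \<in> I)"

definition is_local :: "'a::field fps set \<Rightarrow> bool" where
  "is_local R \<longleftrightarrow> is_ideal_of (max_ideal R) R \<and> max_ideal R \<noteq> R"

text \<open>Residue field R/m equals k: every element is a constant modulo m.\<close>
definition residue_field_is_k :: "'a::field fps set \<Rightarrow> bool" where
  "residue_field_is_k R \<longleftrightarrow> (\<forall>r\<in>R. \<exists>c. r - fps_const c \<in> max_ideal R)"

definition ideal_prod :: "'a::field fps set \<Rightarrow> 'a fps set \<Rightarrow> 'a fps set" where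
  "ideal_prod A B = {x. \<exists>(n::nat) f g. x = (\<Sum>l<n. f l * g l) \<and> (\<forall>l<n. f l \<in> A \<and> g l \<in> B)}"

fun ideal_pow :: "'a::field fps set \<Rightarrow> 'a fps set \<Rightarrow> nat \<Rightarrow> 'a fps set" where
  "ideal_pow R m 0 = R"
| "ideal_pow R m (Suc n) = ideal_prod m (ideal_pow R m n)"

definition madic_complete :: "'a::field fps set \<Rightarrow> bool" where
  "madic_complete R \<longleftrightarrow>
     (\<forall>s::nat \<Rightarrow> 'a fps. (\<forall>p. s p \<in> R) \<longrightarrow>
        (\<forall>N. \<exists>M. \<forall>p\<ge>M. \<forall>q\<ge>M. s p - s q \<in> ideal_pow R (max_ideal R) N) \<longrightarrow>
        (\<exists>L\<in>R. \<forall>N. \<exists>M. \<forall>p\<ge>M. s p - L \<in> ideal_pow R (max_ideal R) N))"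

definition conductor :: "'a::field fps set \<Rightarrow> 'a fps set" where
  "conductor R = {x \<in> R. \<forall>y. x * y \<in> R}"

definition val_set :: "'a::field fps set \<Rightarrow> nat set" where
  "val_set I = subdegree ` (I - {0})"

definition colon :: "'a::field fps set \<Rightarrow> 'a fps set \<Rightarrow> 'a fps set" where
  "colon A B = {x. \<forall>y\<in>B. x * y \<in> A}"

definition blowup :: "'a::field fps set \<Rightarrow> 'a fps set" where
  "blowup R = (\<Union>n. colon (ideal_pow R (max_ideal R) n) (ideal_pow R (max_ideal R) n))"

definition mult_e :: "'a::field fps set \<Rightarrow> nat" where
  "mult_e R = (LEAST s. s \<in> val_set R \<and> 0 < s)"

definition wmin :: "nat set \<Rightarrow> nat \<Rightarrow> nat \<Rightarrow> nat" where
  "wmin A e j = (LEAST s. s \<in> A \<and> s mod e = j mod e)"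

definition w_idx :: "'a::field fps set \<Rightarrow> nat \<Rightarrow> nat" where
  "w_idx R j = wmin (val_set R) (mult_e R) j"

definition w'_idx :: "'a::field fps set \<Rightarrow> nat \<Rightarrow> nat" where
  "w'_idx R j = wmin (val_set (blowup R)) (mult_e R) j"

definition b_idx :: "'a::field fps set \<Rightarrow> nat \<Rightarrow> nat" where
  "b_idx R j = (GREATEST i. w_idx R j \<in> val_set (ideal_pow R (max_ideal R) i))"

text \<open>a_j defined by w'_j = w_j - a_j e.\<close>
definition a_idx :: "'a::field fps set \<Rightarrow> nat \<Rightarrow> int" where
  "a_idx R j = (int (w_idx R j) - int (w'_idx R j)) div int (mult_e R)"

end

theory Submission
  imports Defs
begin

unbundle fps_syntax

(* Let x \<in> R have the minimal positive value e.  The heart of the proof is that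
   the powers of the maximal ideal become principal over x:  m^(n+1) = x m^n for
   all large n.  To see this, consider the k-vector spaces
   L N = {z. x^N z \<in> m^(N+1)}; they increase with N and all contain every series of
   t-adic order at least c, where t^c k[[t]] lies in the conductor.  A space of this
   kind is determined by its values below c, so the chain stops growing at some N,
   and from there on m^(n+1) = x m^n.  Consequently every f \<in> m^b factors as
   f = x^b g with g \<in> (m^n : m^n) \<subseteq> R' for a fixed large n, whence
   v(f) = b e + v(g).  Applied to f \<in> m^(b_j) with v(f) = w_j, this gives
   w'_j \<le> w_j - b_j e, i.e. a_j \<ge> b_j. *)


section \<open>Series of large order\<close>

definition order_ge :: "nat \<Rightarrow> 'a::zero fps \<Rightarrow> bool" where
  "order_ge k y \<longleftrightarrow> (\<forall>i<k. y $ i = 0)"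

lemma order_ge_iff: "order_ge k y \<longleftrightarrow> y = 0 \<or> k \<le> subdegree y"
  unfolding order_ge_def
  by (meson fps_zero_nth leD leI nth_subdegree_nonzero order.strict_trans1 subdegree_leI)

lemma order_ge_mono: "order_ge k f \<Longrightarrow> k' \<le> k \<Longrightarrow> order_ge k' f"
  unfolding order_ge_def by auto

lemma order_ge_mult:
  fixes f g :: "'a::semiring_0 fps"
  assumes "order_ge a f" "order_ge b g"
  shows "order_ge (a + b) (f * g)"
  unfolding order_ge_def fps_mult_nth
proof (intro allI impI sum.neutral ballI)
  fix n i assume "n < a + b" "i \<in> {0..n}"
  then have "i < a \<or> n - i < b" by auto
  then show "f $ i * g $ (n - i) = 0" using assms unfolding order_ge_def by auto
qed

lemma order_ge_sum:
  fixes F :: "nat \<Rightarrow> 'a::comm_monoid_add fps"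
  shows "(\<And>l. l < n \<Longrightarrow> order_ge k (F l)) \<Longrightarrow> order_ge k (\<Sum>l<n. F l)"
  unfolding order_ge_def fps_sum_nth by auto

lemma order_ge_dvd:
  fixes x y :: "'a::field fps"
  assumes "x \<noteq> 0" "order_ge (subdegree x) y"
  shows "\<exists>w. y = x * w"
proof (cases "y = 0")
  case False
  then have "x dvd y" using assms fps_dvd_iff order_ge_iff by blast
  then show ?thesis by (rule dvdE) blast
qed simp

lemma cancel_leading_coeff:
  fixes w u :: "'a::field fps"
  assumes "w \<noteq> 0" "u \<noteq> 0" "subdegree w = s" "subdegree u = s"
  shows "order_ge (Suc s) (w - fps_const (w $ s / u $ s) * u)"
  unfolding order_ge_def
proof (intro allI impI)
  fix i assume "i < Suc s"
  then consider "i < s" | "i = s" by linarith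
  then show "(w - fps_const (w $ s / u $ s) * u) $ i = 0"
  proof cases
    case 1
    then have "i < subdegree w" "i < subdegree u" using assms(3,4) by simp_all
    then have "w $ i = 0" "u $ i = 0" by auto
    then show ?thesis by simp
  next
    case 2
    have "u $ s \<noteq> 0" by (metis assms(2,4) nth_subdegree_nonzero)
    then show ?thesis using 2 by simp
  qed
qed


section \<open>Two finiteness facts\<close>

text \<open>The proof eliminates the coefficients below c one at a time.\<close>

lemma subspace_determined_by_values:
  fixes V V' :: "'a::field fps set"
  assumes sub: "V \<subseteq> V'"
    and V_add: "\<And>a b. a \<in> V \<Longrightarrow> b \<in> V \<Longrightarrow> a + b \<in> V"
    and V_smult: "\<And>a l. a \<in> V \<Longrightarrow> fps_const l * a \<in> V"
    and V'_diff: "\<And>a b. a \<in> V' \<Longrightarrow> b \<in> V' \<Longrightarrow> a - b \<in> V'"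
    and V'_smult: "\<And>a l. a \<in> V' \<Longrightarrow> fps_const l * a \<in> V'"
    and tail: "\<And>g. order_ge c g \<Longrightarrow> g \<in> V"
    and same_values: "subdegree ` (V' - {0}) \<inter> {..<c} \<subseteq> subdegree ` (V - {0})"
  shows "V' \<subseteq> V"
proof -
  have "\<forall>w\<in>V'. order_ge (c - k) w \<longrightarrow> w \<in> V" for k
  proof (induction k)
    case 0
    then show ?case using tail by simp
  next
    case (Suc k)
    show ?case
    proof (intro ballI impI)
      fix w assume w: "w \<in> V'" "order_ge (c - Suc k) w"
      define s where "s = c - Suc k"
      show "w \<in> V"
      proof (cases "k < c \<and> w \<noteq> 0 \<and> subdegree w = s")
        case False
        then have "order_ge (c - k) w"
          using w(2) unfolding order_ge_iff s_def by auto
        then show ?thesis using Suc.IH w(1) by blast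
      next
        case True
        then have "s \<in> subdegree ` (V' - {0}) \<inter> {..<c}" using w(1) s_def by force
        then have "s \<in> subdegree ` (V - {0})" using same_values by blast
        then obtain u where u: "u \<in> V" "u \<noteq> 0" "subdegree u = s" by auto
        define lam where "lam = w $ s / u $ s"
        have "order_ge (c - k) (w - fps_const lam * u)"
          using cancel_leading_coeff[of w u s] True u unfolding lam_def s_def
          by (simp add: Suc_diff_Suc)
        moreover have "w - fps_const lam * u \<in> V'" using u(1) sub w(1) V'_diff V'_smult by blast
        ultimately have "w - fps_const lam * u \<in> V" using Suc.IH by blast
        then have "(w - fps_const lam * u) + fps_const lam * u \<in> V" using u(1) V_add V_smult by blast
        then show ?thesis by simp
      qed
    qed
  qed
  from this[of c] show ?thesis unfolding order_ge_def by auto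
qed

lemma increasing_chain_stalls:
  fixes W :: "nat \<Rightarrow> 'b set"
  assumes mono: "\<And>N. W N \<subseteq> W (Suc N)" and bounded: "\<And>N. W N \<subseteq> A" and "finite A"
  shows "\<exists>N. W (Suc N) \<subseteq> W N"
proof (rule ccontr)
  assume "\<not> ?thesis"
  then have grows: "W N \<subset> W (Suc N)" for N using mono by blast
  have fin: "finite (W N)" for N using bounded \<open>finite A\<close> finite_subset by blast
  have "N \<le> card (W N)" for N
  proof (induction N)
    case (Suc N)
    then show ?case using psubset_card_mono[OF fin grows, of N] by simp
  qed simp
  moreover have "card (W N) \<le> card A" for N using \<open>finite A\<close> bounded by (rule card_mono)
  ultimately show False using not_less_eq_eq order_trans by blast
qed


section \<open>Products of sets of series\<close>

lemma ideal_prodI: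
  fixes n :: nat
  assumes "y = (\<Sum>l<n. f l * g l)" "\<forall>l<n. f l \<in> A \<and> g l \<in> B"
  shows "y \<in> ideal_prod A B"
  unfolding ideal_prod_def using assms by auto

lemma ideal_prodE:
  assumes "y \<in> ideal_prod A B"
  obtains n :: nat and f g where "y = (\<Sum>l<n. f l * g l)" "\<forall>l<n. f l \<in> A \<and> g l \<in> B"
  using assms unfolding ideal_prod_def by auto

lemma ideal_prod_mem: "a \<in> A \<Longrightarrow> b \<in> B \<Longrightarrow> a * b \<in> ideal_prod A B"
  by (rule ideal_prodI[where n = 1 and f = "\<lambda>_. a" and g = "\<lambda>_. b"]) auto

lemma ideal_prod_add:
  assumes x: "x \<in> ideal_prod A B" and y: "y \<in> ideal_prod A B"
  shows "x + y \<in> ideal_prod A B"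
proof -
  obtain n :: nat and f g where y: "y = (\<Sum>l<n. f l * g l)" "\<forall>l<n. f l \<in> A \<and> g l \<in> B"
    using y by (rule ideal_prodE)
  have "\<forall>l<n. f l \<in> A \<and> g l \<in> B \<Longrightarrow> x + (\<Sum>l<n. f l * g l) \<in> ideal_prod A B" for n
  proof (induction n)
    case 0
    then show ?case using x by simp
  next
    case (Suc n)
    obtain n' :: nat and f' g' where x':
      "x + (\<Sum>l<n. f l * g l) = (\<Sum>l<n'. f' l * g' l)" "\<forall>l<n'. f' l \<in> A \<and> g' l \<in> B"
      using Suc by (auto elim: ideal_prodE)
    have "x + (\<Sum>l<Suc n. f l * g l) = (\<Sum>l<Suc n'. (f'(n' := f n)) l * (g'(n' := g n)) l)"
      using x'(1) by (simp add: add.assoc[symmetric])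
    moreover have "\<forall>l<Suc n'. (f'(n' := f n)) l \<in> A \<and> (g'(n' := g n)) l \<in> B"
      using x'(2) Suc.prems by (auto simp: less_Suc_eq)
    ultimately show ?case by (rule ideal_prodI)
  qed
  then show ?thesis using y by blast
qed

lemma ideal_prod_subset:
  assumes "is_subring_fps R" "A \<subseteq> R" "B \<subseteq> R"
  shows "ideal_prod A B \<subseteq> R"
proof
  fix y assume "y \<in> ideal_prod A B"
  then obtain n :: nat and f g where y: "y = (\<Sum>l<n. f l * g l)" "\<forall>l<n. f l \<in> A \<and> g l \<in> B"
    by (rule ideal_prodE)
  have "\<forall>l<n. f l \<in> A \<and> g l \<in> B \<Longrightarrow> (\<Sum>l<n. f l * g l) \<in> R" for n
  proof (induction n)
    case (Suc n)
    then have "(\<Sum>l<n. f l * g l) \<in> R" "f n \<in> R" "g n \<in> R" using assms by auto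
    then show ?case using assms(1) unfolding is_subring_fps_def by auto
  qed (use assms(1) in \<open>simp add: is_subring_fps_def\<close>)
  then show "y \<in> R" using y by blast
qed

lemma ideal_prod_mult_right:
  assumes "y \<in> ideal_prod A B" "\<And>b. b \<in> B \<Longrightarrow> r * b \<in> B"
  shows "r * y \<in> ideal_prod A B"
proof -
  obtain n :: nat and f g where y: "y = (\<Sum>l<n. f l * g l)" "\<forall>l<n. f l \<in> A \<and> g l \<in> B"
    using assms(1) by (rule ideal_prodE)
  have "r * y = (\<Sum>l<n. f l * (r * g l))"
    using y(1) by (simp add: sum_distrib_left mult.left_commute)
  moreover have "\<forall>l<n. f l \<in> A \<and> r * g l \<in> B" using y(2) assms(2) by auto
  ultimately show ?thesis by (rule ideal_prodI)
qed

lemma ideal_prod_factor: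
  assumes y: "y \<in> ideal_prod A B" and factor: "\<And>b. b \<in> B \<Longrightarrow> \<exists>c\<in>C. b = x * c"
  shows "\<exists>z\<in>ideal_prod A C. y = x * z"
proof -
  obtain n :: nat and f g where y: "y = (\<Sum>l<n. f l * g l)" "\<forall>l<n. f l \<in> A \<and> g l \<in> B"
    using y by (rule ideal_prodE)
  have factors: "\<forall>l\<in>{..<n}. \<exists>c. c \<in> C \<and> g l = x * c" using factor y(2) by blast
  obtain h where h: "\<forall>l\<in>{..<n}. h l \<in> C \<and> g l = x * h l"
    using bchoice[OF factors] by blast
  have "y = x * (\<Sum>l<n. f l * h l)"
    unfolding y(1) sum_distrib_left using h by (intro sum.cong) (auto simp: mult.left_commute)
  moreover have "(\<Sum>l<n. f l * h l) \<in> ideal_prod A C"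
    using y(2) h by (intro ideal_prodI[OF refl]) auto
  ultimately show ?thesis by blast
qed


section \<open>The ring R and the powers of its maximal ideal\<close>

declare ideal_pow.simps(2)[simp del]

locale local_fps_subring =
  fixes R :: "'a::field fps set"
  assumes subring: "is_subring_fps R"
    and constants: "contains_constants R"
    and local_ring: "is_local R"
    and conductor_nonzero: "conductor R \<noteq> {0}"
begin

abbreviation "m \<equiv> max_ideal R"
abbreviation "mpow \<equiv> ideal_pow R m"
abbreviation "e \<equiv> mult_e R"

lemma mpow_Suc: "mpow (Suc n) = ideal_prod m (mpow n)"
  by (rule ideal_pow.simps(2))

lemma R_zero: "0 \<in> R" and R_one: "1 \<in> R"
  and R_add: "x \<in> R \<Longrightarrow> y \<in> R \<Longrightarrow> x + y \<in> R"
  and R_diff: "x \<in> R \<Longrightarrow> y \<in> R \<Longrightarrow> x - y \<in> R"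
  and R_mult: "x \<in> R \<Longrightarrow> y \<in> R \<Longrightarrow> x * y \<in> R"
  using subring unfolding is_subring_fps_def by auto

lemma R_minus_one: "-1 \<in> R"
  using R_diff[OF R_zero R_one] by simp

lemma R_const: "fps_const c \<in> R"
  using constants unfolding contains_constants_def by auto

lemma m_subset: "m \<subseteq> R"
  unfolding max_ideal_def by auto

lemma m_add: "x \<in> m \<Longrightarrow> y \<in> m \<Longrightarrow> x + y \<in> m"
  and m_mult: "x \<in> m \<Longrightarrow> r \<in> R \<Longrightarrow> r * x \<in> m"
  using local_ring unfolding is_local_def is_ideal_of_def by auto

lemma m_diff: "x \<in> m \<Longrightarrow> y \<in> m \<Longrightarrow> x - y \<in> m"
  using m_add[of x "-1 * y"] m_mult[OF _ R_minus_one] by simp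

lemma max_ideal_eq: "m = {r \<in> R. r $ 0 = 0}"
proof
  show "{r \<in> R. r $ 0 = 0} \<subseteq> m"
  proof
    fix r assume r: "r \<in> {r \<in> R. r $ 0 = 0}"
    have "r * s \<noteq> 1" for s
    proof
      assume "r * s = 1"
      then have "(r * s) $ 0 = 1" by simp
      then show False using r by simp
    qed
    then show "r \<in> m" using r unfolding max_ideal_def by auto
  qed
  note no_const_in_m = this
  show "m \<subseteq> {r \<in> R. r $ 0 = 0}"
  proof (intro subsetI CollectI conjI)
    fix r assume r: "r \<in> m"
    then show rR: "r \<in> R" using m_subset by auto
    show "r $ 0 = 0"
    proof (rule ccontr)
      assume r0: "r $ 0 \<noteq> 0"
      have "r - fps_const (r $ 0) \<in> {r \<in> R. r $ 0 = 0}" using rR R_const R_diff by simp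
      then have "r - fps_const (r $ 0) \<in> m" using no_const_in_m by blast
      then have "r - (r - fps_const (r $ 0)) \<in> m" using r m_diff by blast
      then have "fps_const (r $ 0) \<in> m" by simp
      moreover have "fps_const (r $ 0) * fps_const (inverse (r $ 0)) = 1"
        using r0 by (simp add: fps_const_mult[symmetric])
      ultimately show False using R_const unfolding max_ideal_def by blast
    qed
  qed
qed

lemma mpow_ideal:
  "mpow n \<subseteq> R \<and> (\<forall>x\<in>mpow n. \<forall>y\<in>mpow n. x + y \<in> mpow n) \<and> (\<forall>x\<in>mpow n. \<forall>r\<in>R. r * x \<in> mpow n)"
proof (induction n)
  case 0
  then show ?case using R_add R_mult by simp
next
  case (Suc n)
  have "ideal_prod m (mpow n) \<subseteq> R"
    using Suc.IH by (intro ideal_prod_subset[OF subring m_subset]) blast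
  moreover have "\<forall>x\<in>ideal_prod m (mpow n). \<forall>r\<in>R. r * x \<in> ideal_prod m (mpow n)"
    using Suc.IH by (blast intro: ideal_prod_mult_right)
  ultimately show ?case by (simp add: mpow_Suc ideal_prod_add)
qed

lemma mpow_add: "x \<in> mpow n \<Longrightarrow> y \<in> mpow n \<Longrightarrow> x + y \<in> mpow n"
  and mpow_mult: "x \<in> mpow n \<Longrightarrow> r \<in> R \<Longrightarrow> r * x \<in> mpow n"
  using mpow_ideal[of n] by auto

lemma mpow_diff: "x \<in> mpow n \<Longrightarrow> y \<in> mpow n \<Longrightarrow> x - y \<in> mpow n"
  using mpow_add[of x n "-1 * y"] mpow_mult[OF _ R_minus_one] by simp

lemma mpow_Suc_mem: "a \<in> m \<Longrightarrow> y \<in> mpow n \<Longrightarrow> a * y \<in> mpow (Suc n)"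
  by (simp add: ideal_prod_mem mpow_Suc)

lemma mpow_prod: "f \<in> mpow a \<Longrightarrow> y \<in> mpow c \<Longrightarrow> f * y \<in> mpow (a + c)"
proof (induction a arbitrary: f)
  case 0
  then show ?case using mpow_mult[of y c f] by (simp add: mult.commute)
next
  case (Suc a)
  obtain n :: nat and F G where f: "f = (\<Sum>l<n. F l * G l)" "\<forall>l<n. F l \<in> m \<and> G l \<in> mpow a"
    using Suc.prems(1) by (auto simp: mpow_Suc elim: ideal_prodE)
  have "f * y = (\<Sum>l<n. F l * (G l * y))"
    using f(1) by (simp add: sum_distrib_right mult.assoc)
  then show ?case using f(2) Suc.IH Suc.prems(2) by (auto simp: mpow_Suc intro!: ideal_prodI)
qed


lemma conductor_bound: "\<exists>c>0. \<forall>g. order_ge c g \<longrightarrow> g \<in> R"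
proof -
  have "0 \<in> conductor R" unfolding conductor_def using R_zero by simp
  then obtain z where z: "z \<in> conductor R" "z \<noteq> 0" using conductor_nonzero by blast
  have "g \<in> R" if "order_ge (Suc (subdegree z)) g" for g
  proof -
    have "order_ge (subdegree z) g" using that by (rule order_ge_mono) simp
    then obtain q where "g = z * q" using order_ge_dvd z(2) by blast
    then show ?thesis using z(1) unfolding conductor_def by simp
  qed
  then show ?thesis by blast
qed

definition cexp :: nat where
  "cexp = (SOME c. 0 < c \<and> (\<forall>g. order_ge c g \<longrightarrow> g \<in> R))"

lemma cexp_pos: "0 < cexp" and order_ge_cexp_in_R: "order_ge cexp g \<Longrightarrow> g \<in> R"
  using someI_ex[OF conductor_bound] unfolding cexp_def by auto

lemma order_ge_cexp_in_m:
  assumes "order_ge cexp g"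
  shows "g \<in> m"
proof -
  have "g $ 0 = 0" using assms cexp_pos unfolding order_ge_def by blast
  then show ?thesis using order_ge_cexp_in_R[OF assms] by (simp add: max_ideal_eq)
qed

lemma X_power_value:
  assumes "cexp \<le> s"
  shows "s \<in> val_set R"
proof -
  have "fps_X ^ s \<in> R" using assms by (intro order_ge_cexp_in_R) (simp add: order_ge_def)
  then have "fps_X ^ s \<in> R - {0}" by simp
  then show ?thesis unfolding val_set_def by (rule rev_image_eqI) (simp add: fps_X_power_subdegree)
qed


lemma e_props: "e \<in> val_set R" "0 < e" "\<And>s. s \<in> val_set R \<Longrightarrow> 0 < s \<Longrightarrow> e \<le> s"
proof -
  have ex: "\<exists>s. s \<in> val_set R \<and> 0 < s" using X_power_value[of cexp] cexp_pos by auto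
  show "e \<in> val_set R" "0 < e" using LeastI_ex[OF ex] unfolding mult_e_def by auto
  show "\<And>s. s \<in> val_set R \<Longrightarrow> 0 < s \<Longrightarrow> e \<le> s" unfolding mult_e_def by (simp add: Least_le)
qed

lemma m_order_ge:
  assumes "y \<in> m"
  shows "order_ge e y"
proof (cases "y = 0")
  case False
  have y: "y \<in> R" "y $ 0 = 0" using assms max_ideal_eq by auto
  then have "subdegree y \<in> val_set R" using False unfolding val_set_def by auto
  moreover have "0 < subdegree y" using y False subdegree_eq_0_iff by auto
  ultimately show ?thesis using e_props(3) order_ge_iff by blast
qed (simp add: order_ge_def)

lemma mpow_order_ge: "y \<in> mpow n \<Longrightarrow> order_ge (n * e) y"
proof (induction n arbitrary: y)
  case 0
  then show ?case unfolding order_ge_def by simp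
next
  case (Suc n)
  then obtain k :: nat and F G where y: "y = (\<Sum>l<k. F l * G l)" "\<forall>l<k. F l \<in> m \<and> G l \<in> mpow n"
    by (auto simp: mpow_Suc elim: ideal_prodE)
  have "order_ge (e + n * e) (F l * G l)" if "l < k" for l
    using y(2) that m_order_ge Suc.IH by (intro order_ge_mult) auto
  then show ?case unfolding y(1) by (intro order_ge_sum) simp
qed

lemma value_in_mpow_bound: "s \<in> val_set (mpow i) \<Longrightarrow> i \<le> s"
proof -
  assume "s \<in> val_set (mpow i)"
  then obtain f where "f \<in> mpow i" "f \<noteq> 0" "s = subdegree f" unfolding val_set_def by blast
  then have "i * e \<le> s" using mpow_order_ge[of f i] unfolding order_ge_iff by simp
  moreover have "i \<le> i * e" using e_props(2) by simp
  ultimately show ?thesis by linarith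
qed

definition xe :: "'a fps" where
  "xe = (SOME x. x \<in> R \<and> x \<noteq> 0 \<and> subdegree x = e)"

lemma xe: "xe \<in> R" "xe \<noteq> 0" "subdegree xe = e"
proof -
  have "\<exists>x. x \<in> R \<and> x \<noteq> 0 \<and> subdegree x = e" using e_props(1) unfolding val_set_def by auto
  then have "xe \<in> R \<and> xe \<noteq> 0 \<and> subdegree xe = e" unfolding xe_def by (rule someI_ex)
  then show "xe \<in> R" "xe \<noteq> 0" "subdegree xe = e" by auto
qed

lemma xe_in_m: "xe \<in> m"
proof -
  have "xe $ 0 = 0" using xe(3) e_props(2) by (intro nth_less_subdegree_zero) simp
  then show ?thesis using xe(1) by (simp add: max_ideal_eq)
qed

lemma xe_power_in_mpow: "xe ^ k \<in> mpow k"
proof (induction k)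
  case 0
  then show ?case using R_one by simp
next
  case (Suc k)
  then show ?case using mpow_Suc_mem[OF xe_in_m Suc.IH] by simp
qed

lemma subdegree_xe_power: "subdegree (xe ^ k) = k * e"
  using xe by simp

lemma xe_power_dvd: "order_ge (k * e) y \<Longrightarrow> \<exists>w. y = xe ^ k * w"
  using order_ge_dvd[of "xe ^ k" y] xe(2) unfolding subdegree_xe_power by simp

text \<open>A series of order at least k e + c lies in m^(k+1): it is x^k times a series
  of order at least c, which lies in m.\<close>

lemma large_order_in_mpow:
  assumes "order_ge (k * e + cexp) g"
  shows "g \<in> mpow (Suc k)"
proof -
  obtain w where g: "g = xe ^ k * w"
    using xe_power_dvd order_ge_mono[OF assms] by (metis le_add1)
  have "order_ge cexp w"
  proof (cases "w = 0")
    case False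
    have "k * e + cexp \<le> subdegree g" using assms False g xe(2) unfolding order_ge_iff by simp
    also have "subdegree g = k * e + subdegree w" using g False xe by simp
    finally show ?thesis unfolding order_ge_iff by simp
  qed (simp add: order_ge_def)
  then have "w * xe ^ k \<in> mpow (Suc k)"
    using mpow_Suc_mem order_ge_cexp_in_m xe_power_in_mpow by blast
  then show ?thesis using g by (simp add: mult.commute)
qed


definition lift_set :: "nat \<Rightarrow> 'a fps set" where
  "lift_set N = {z. xe ^ N * z \<in> mpow (Suc N)}"

lemma lift_set_add: "a \<in> lift_set N \<Longrightarrow> b \<in> lift_set N \<Longrightarrow> a + b \<in> lift_set N"
  unfolding lift_set_def using mpow_add by (simp add: distrib_left)

lemma lift_set_diff: "a \<in> lift_set N \<Longrightarrow> b \<in> lift_set N \<Longrightarrow> a - b \<in> lift_set N"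
  unfolding lift_set_def using mpow_diff by (simp add: right_diff_distrib)

lemma lift_set_smult: "a \<in> lift_set N \<Longrightarrow> fps_const l * a \<in> lift_set N"
  unfolding lift_set_def using mpow_mult R_const by (simp add: mult.left_commute)

lemma lift_set_mono: "lift_set N \<subseteq> lift_set (Suc N)"
proof
  fix z assume "z \<in> lift_set N"
  then have "xe * (xe ^ N * z) \<in> mpow (Suc (Suc N))"
    unfolding lift_set_def by (simp add: mpow_Suc_mem[OF xe_in_m])
  then show "z \<in> lift_set (Suc N)" unfolding lift_set_def by (simp add: mult.assoc)
qed

lemma order_ge_cexp_in_lift_set:
  assumes "order_ge cexp g"
  shows "g \<in> lift_set N"
proof -
  have "order_ge (N * e + cexp) (xe ^ N * g)"
    using mpow_order_ge[OF xe_power_in_mpow] assms by (rule order_ge_mult)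
  then show ?thesis unfolding lift_set_def by (simp add: large_order_in_mpow)
qed

text \<open>The chain stops growing: its values below c increase inside a finite set, and
  these values determine the spaces.\<close>

lemma lift_set_stalls: "\<exists>N. lift_set (Suc N) \<subseteq> lift_set N"
proof -
  define W where "W N = subdegree ` (lift_set N - {0}) \<inter> {..<cexp}" for N
  have mono: "W N \<subseteq> W (Suc N)" for N unfolding W_def using lift_set_mono[of N] by blast
  have bounded: "W N \<subseteq> {..<cexp}" for N unfolding W_def by blast
  obtain N where stalled: "W (Suc N) \<subseteq> W N"
    using increasing_chain_stalls[of W "{..<cexp}", OF mono bounded] by blast
  have "lift_set (Suc N) \<subseteq> lift_set N"
  proof (rule subspace_determined_by_values)
    show "subdegree ` (lift_set (Suc N) - {0}) \<inter> {..<cexp} \<subseteq> subdegree ` (lift_set N - {0})"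
      using stalled unfolding W_def by blast
  qed (fact lift_set_mono lift_set_add lift_set_smult lift_set_diff order_ge_cexp_in_lift_set)+
  then show ?thesis by blast
qed


text \<open>Once the chain L stalls at N, m^(n+1) = x m^n for n > N: at n = N + 1 by
  dividing by x^(N+1), and beyond by pulling x out of m (x m^n).\<close>

lemma mpow_eventually_shift: "\<exists>N. \<forall>n\<ge>N. \<forall>y\<in>mpow (Suc n). \<exists>z\<in>mpow n. y = xe * z"
proof -
  obtain N where N: "lift_set (Suc N) \<subseteq> lift_set N" using lift_set_stalls by blast
  have "\<forall>y\<in>mpow (Suc n). \<exists>z\<in>mpow n. y = xe * z" if "Suc N \<le> n" for n
    using that
  proof (induction n rule: dec_induct)
    case base
    show ?case
    proof
      fix y assume y: "y \<in> mpow (Suc (Suc N))"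
      have "order_ge (Suc N * e) y"
        using mpow_order_ge[OF y] by (rule order_ge_mono) simp
      then obtain z where z: "y = xe ^ Suc N * z" using xe_power_dvd by blast
      then have "z \<in> lift_set N" using y N unfolding lift_set_def by auto
      then have "xe ^ N * z \<in> mpow (Suc N)" unfolding lift_set_def by simp
      moreover have "y = xe * (xe ^ N * z)" using z by (simp add: mult.assoc)
      ultimately show "\<exists>z\<in>mpow (Suc N). y = xe * z" by blast
    qed
  next
    case (step n)
    then show ?case using ideal_prod_factor by (simp add: mpow_Suc) blast
  qed
  then show ?thesis by blast
qed

lemma mpow_power_shift: "\<exists>n0. \<forall>k. \<forall>y\<in>mpow (n0 + k). \<exists>z\<in>mpow n0. y = xe ^ k * z"
proof -
  obtain n0 where n0: "\<forall>n\<ge>n0. \<forall>y\<in>mpow (Suc n). \<exists>z\<in>mpow n. y = xe * z"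
    using mpow_eventually_shift by blast
  have "\<forall>y\<in>mpow (n0 + k). \<exists>z\<in>mpow n0. y = xe ^ k * z" for k
  proof (induction k)
    case (Suc k)
    show ?case
    proof
      fix y assume "y \<in> mpow (n0 + Suc k)"
      then have "y \<in> mpow (Suc (n0 + k))" by simp
      then obtain z1 where z1: "z1 \<in> mpow (n0 + k)" "y = xe * z1" using n0 le_add1 by blast
      then obtain z where "z \<in> mpow n0" "z1 = xe ^ k * z" using Suc.IH by blast
      then show "\<exists>z\<in>mpow n0. y = xe ^ Suc k * z" using z1 by (auto simp: mult.assoc)
    qed
  qed simp
  then show ?thesis by blast
qed

lemma mpow_factor_through_blowup:
  assumes "f \<in> mpow b" "f \<noteq> 0"
  shows "\<exists>g\<in>blowup R. g \<noteq> 0 \<and> subdegree f = b * e + subdegree g"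
proof -
  obtain n0 where n0: "\<forall>k. \<forall>y\<in>mpow (n0 + k). \<exists>z\<in>mpow n0. y = xe ^ k * z"
    using mpow_power_shift by blast
  obtain g where g: "f = xe ^ b * g" using xe_power_dvd mpow_order_ge[OF assms(1)] by blast
  have "g \<noteq> 0" using g assms(2) by auto
  have "g \<in> colon (mpow n0) (mpow n0)"
    unfolding colon_def
  proof (intro CollectI ballI)
    fix y assume y: "y \<in> mpow n0"
    have "f * y \<in> mpow (n0 + b)" using mpow_prod[OF assms(1) y] by (simp add: add.commute)
    then obtain z where z: "z \<in> mpow n0" "f * y = xe ^ b * z" using n0 by blast
    then have "xe ^ b * (g * y) = xe ^ b * z" using g by (simp add: mult.assoc)
    then show "g * y \<in> mpow n0" using z(1) xe(2) by simp
  qed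
  then have "g \<in> blowup R" unfolding blowup_def by blast
  moreover have "subdegree f = b * e + subdegree g" using g \<open>g \<noteq> 0\<close> xe by simp
  ultimately show ?thesis using \<open>g \<noteq> 0\<close> by blast
qed


text \<open>w_j exists (t^s \<in> R for s \<ge> c), lies in m^(b_j), and w'_j is a lower bound
  for the values of R' in the residue class of j.\<close>

lemma w_idx: "w_idx R j \<in> val_set R" "w_idx R j mod e = j mod e"
proof -
  have "cexp * e + j \<in> val_set R"
    using X_power_value e_props(2) by (simp add: trans_le_add1)
  then have "\<exists>s. s \<in> val_set R \<and> s mod e = j mod e" by (intro exI[of _ "cexp * e + j"]) simp
  from LeastI_ex[OF this] show "w_idx R j \<in> val_set R" "w_idx R j mod e = j mod e"
    unfolding w_idx_def wmin_def by auto
qed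

lemma w_idx_in_mpow_b_idx: "w_idx R j \<in> val_set (mpow (b_idx R j))"
  unfolding b_idx_def
  by (rule GreatestI_nat[where k = 0 and b = "w_idx R j"])
     (use w_idx(1) value_in_mpow_bound in auto)

lemma w'_idx_le:
  "s \<in> val_set (blowup R) \<Longrightarrow> s mod e = j mod e \<Longrightarrow> w'_idx R j \<le> s"
  unfolding w'_idx_def wmin_def by (simp add: Least_le)

end


theorem mainTheorem7:
  fixes R :: "'a::field fps set"
  assumes "is_subring_fps R"
    and "contains_constants R"
    and "is_local R"
    and "residue_field_is_k R"
    and "madic_complete R"
    and "conductor R \<noteq> {0}"
    and "j < mult_e R"
  shows "int (b_idx R j) \<le> a_idx R j"
proof -
  interpret local_fps_subring R using assms by unfold_locales
  define w b where "w = w_idx R j" and "b = b_idx R j"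
  obtain f where f: "f \<in> mpow b - {0}" "subdegree f = w"
    using w_idx_in_mpow_b_idx[of j] unfolding val_set_def w_def b_def by (metis imageE)
  obtain g where g: "g \<in> blowup R" "g \<noteq> 0" "w = b * e + subdegree g"
    using mpow_factor_through_blowup[of f b] f by auto
  have "subdegree g mod e = j mod e" using w_idx(2) g(3) unfolding w_def by (metis mod_mult_self3)
  then have "w'_idx R j \<le> subdegree g"
    using g(1,2) by (intro w'_idx_le) (auto simp: val_set_def)
  then have "int b * int e \<le> int w - int (w'_idx R j)" using g(3) by simp
  then have "(int b * int e) div int e \<le> (int w - int (w'_idx R j)) div int e"
    by (rule zdiv_mono1) (use e_props(2) in simp)
  then show ?thesis unfolding a_idx_def w_def b_def using e_props(2) by simp
qed

end
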